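(* Let $n\ge 1$ and $1\le k\le d$ be integers, set $p=k/d$, and let $\mathbf{x}_1,\dots,\mathbf{x}_n\in\mathbb{R}^d$ with $\mathbf{x}_i=(x_{i1},\dots,x_{id})$. Each node $i$ independently chooses a uniformly random subset $S_i\subseteq\{1,\dots,d\}$ of size $k$, and sets $h_{ij}=x_{ij}$ if $j\in S_i$ and $h_{ij}=0$ otherwise. Let $M_j=|\{i:j\in S_i\}|$. Let $T:\{1,\dots,n\}\to\mathbb{R}\setminus\{0\}$ be such that $$\bar\beta=\Big(\sum_{m=1}^{n}\frac{k}{d\,T(m)}\binom{n-1}{m-1}p^{m-1}(1-p)^{n-m}\Big)^{-1}$$ is well defined. Define $\hat{\mathbf{x}}=(\hat x_1,\dots,\hat x_d)$ by $\hat{x}_j=\frac{1}{n}\frac{\bar\beta}{T(M_j)}\sum_{i=1}^n h_{ij}$ if $M_j\ge1$ and $\hat x_j=0$ if $M_j=0$, and let $\bar{\mathbf{x}}=\frac1n\sum_{i=1}^n\mathbf{x}_i$. Then $$\mathbb{E}\big[\|\hat{\mathbf{x}}-\bar{\mathbf{x}}\|_2^2\big]=\frac{1}{n^2}\Big(\frac{d}{k}-1\Big)R_1+\frac{1}{n^2}\big(c_1R_1-c_2R_2\big),$$ where $R_1=\sum_{i=1}^n\|\mathbf{x}_i\|_2^2$, $R_2=2\sum_{i=1}^n\sum_{l=i+1}^n\langle\mathbf{x}_i,\mathbf{x}_l\rangle$, $$c_1=\bar\beta^2\sum_{m=1}^{n}\frac{k}{d\,T(m)^2}\binom{n-1}{m-1}p^{m-1}(1-p)^{n-m}-\frac{d}{k},\qquad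 c_2=1-\bar\beta^2\sum_{m=2}^{n}\frac{k^2}{d^2T(m)^2}\binom{n-2}{m-2}p^{m-2}(1-p)^{n-m},$$ and the expectation is over the random subsets $S_1,\dots,S_n$.
   Context: This is the mean squared error of the Rand-$k$-Spatial family of estimators of $\bar{\mathbf{x}}$ from Rand-$k$ sparsified vectors; the choice $T\equiv1$ recovers the standard Rand-$k$ estimator $\frac{1}{n}\frac{d}{k}\sum_i\mathbf{h}_i$. *)

theory Defs
  imports "HOL-Probability.Probability"
begin

text \<open>Indices are 0-based: nodes i < n, coordinates j < d.
  Vectors are x :: nat \<Rightarrow> nat \<Rightarrow> real, x i j = j-th coordinate of node i.\<close>

definition ksubsets :: "nat \<Rightarrow> nat \<Rightarrow> nat set set" where
  "ksubsets d k = {A. A \<subseteq> {..<d} \<and> card A = k}"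

definition subsets_pmf :: "nat \<Rightarrow> nat \<Rightarrow> nat \<Rightarrow> (nat \<Rightarrow> nat set) pmf" where
  "subsets_pmf n d k = Pi_pmf {..<n} {} (\<lambda>_. pmf_of_set (ksubsets d k))"

definition Mcount :: "nat \<Rightarrow> (nat \<Rightarrow> nat set) \<Rightarrow> nat \<Rightarrow> nat" where
  "Mcount n S j = card {i \<in> {..<n}. j \<in> S i}"

definition hval :: "(nat \<Rightarrow> nat \<Rightarrow> real) \<Rightarrow> (nat \<Rightarrow> nat set) \<Rightarrow> nat \<Rightarrow> nat \<Rightarrow> real" where
  "hval x S i j = (if j \<in> S i then x i j else 0)"

definition beta_bar :: "nat \<Rightarrow> nat \<Rightarrow> nat \<Rightarrow> (nat \<Rightarrow> real) \<Rightarrow> real" where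
  "beta_bar n d k T = inverse (\<Sum>m=1..n. real k / (real d * T m) * real ((n-1) choose (m-1))
       * (real k / real d) ^ (m-1) * (1 - real k / real d) ^ (n-m))"

definition xhat :: "nat \<Rightarrow> nat \<Rightarrow> nat \<Rightarrow> (nat \<Rightarrow> real) \<Rightarrow> (nat \<Rightarrow> nat \<Rightarrow> real)
     \<Rightarrow> (nat \<Rightarrow> nat set) \<Rightarrow> nat \<Rightarrow> real" where
  "xhat n d k T x S j = (if Mcount n S j \<ge> 1
      then (1 / real n) * (beta_bar n d k T / T (Mcount n S j)) * (\<Sum>i<n. hval x S i j)
      else 0)"

definition xbar :: "nat \<Rightarrow> (nat \<Rightarrow> nat \<Rightarrow> real) \<Rightarrow> nat \<Rightarrow> real" where
  "xbar n x j = (1 / real n) * (\<Sum>i<n. x i j)"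

definition R1 :: "nat \<Rightarrow> nat \<Rightarrow> (nat \<Rightarrow> nat \<Rightarrow> real) \<Rightarrow> real" where
  "R1 n d x = (\<Sum>i<n. \<Sum>j<d. (x i j)^2)"

definition R2 :: "nat \<Rightarrow> nat \<Rightarrow> (nat \<Rightarrow> nat \<Rightarrow> real) \<Rightarrow> real" where
  "R2 n d x = 2 * (\<Sum>i<n. \<Sum>l\<in>{i+1..<n}. \<Sum>j<d. x i j * x l j)"

definition c1 :: "nat \<Rightarrow> nat \<Rightarrow> nat \<Rightarrow> (nat \<Rightarrow> real) \<Rightarrow> real" where
  "c1 n d k T = (beta_bar n d k T)^2 * (\<Sum>m=1..n. real k / (real d * (T m)^2)
       * real ((n-1) choose (m-1)) * (real k / real d) ^ (m-1) * (1 - real k / real d) ^ (n-m))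
     - real d / real k"

definition c2 :: "nat \<Rightarrow> nat \<Rightarrow> nat \<Rightarrow> (nat \<Rightarrow> real) \<Rightarrow> real" where
  "c2 n d k T = 1 - (beta_bar n d k T)^2 * (\<Sum>m=2..n. (real k)^2 / ((real d)^2 * (T m)^2)
       * real ((n-2) choose (m-2)) * (real k / real d) ^ (m-2) * (1 - real k / real d) ^ (n-m))"

end

theory Submission
  imports Defs
begin

text \<open>Fix a coordinate j. The events j \<in> S i are independent Bernoulli(k/d) events, and on
  coordinate j the estimator is g(M) times the sum of the x i j over the chosen nodes i, where
  g(m) = beta_bar / (n T(m)) and M ~ Bin(n, k/d) counts the chosen nodes. Conditioning on a fixed
  set J of nodes being chosen turns M into card J + Bin(n - card J, k/d). With card J = 1 this
  shows that the estimator is unbiased, which is exactly what beta_bar is normalised for; with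
  card J \<in> {1, 2} it gives the second moment. So the squared error of each coordinate is a
  variance, and summing over coordinates collects the squares into R1 and the cross terms
  into R2.\<close>

lemma finite_set_Pi_pmf_bernoulli:
  "finite A \<Longrightarrow> finite (set_pmf (Pi_pmf A False (\<lambda>_. bernoulli_pmf p)))"
  by (subst set_Pi_pmf) auto

lemma expectation_Pi_pmf_insert_bernoulli:
  fixes h :: "('a \<Rightarrow> bool) \<Rightarrow> real"
  assumes "finite A" "a \<notin> A" "0 \<le> p" "p \<le> 1"
  shows "measure_pmf.expectation (Pi_pmf (insert a A) False (\<lambda>_. bernoulli_pmf p)) h
    = p * measure_pmf.expectation (Pi_pmf A False (\<lambda>_. bernoulli_pmf p)) (\<lambda>f. h (f(a:=True)))
    + (1-p) * measure_pmf.expectation (Pi_pmf A False (\<lambda>_. bernoulli_pmf p)) (\<lambda>f. h (f(a:=False)))"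
  using assms
  by (simp add: Pi_pmf_insert' map_pmf_def[symmetric], subst pmf_expectation_bind[where A=UNIV])
     (auto simp: finite_set_Pi_pmf_bernoulli UNIV_bool)

lemma expectation_Pi_pmf_bernoulli_all_true:
  fixes g :: "nat \<Rightarrow> real"
  assumes "finite I" "J \<subseteq> I" "0 \<le> p" "p \<le> 1"
  shows "measure_pmf.expectation (Pi_pmf I False (\<lambda>_. bernoulli_pmf p))
           (\<lambda>f. if \<forall>j\<in>J. f j then g (card {i\<in>I. f i}) else 0)
    = p ^ card J * measure_pmf.expectation (binomial_pmf (card I - card J) p) (\<lambda>m. g (m + card J))"
proof -
  have "finite J" using assms finite_subset by blast
  then show ?thesis
    using assms(1,2)
  proof (induction J arbitrary: I g)
    case empty
    then show ?case using assms by (simp add: binomial_pmf_altdef'[of I "card I" p False])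
  next
    case (insert a J)
    define A where "A = I - {a}"
    have I: "I = insert a A" "a \<notin> A" "finite A" "J \<subseteq> A" and card_A: "card A = card I - 1"
      using insert by (auto simp: A_def)
    have card_upd: "card {i\<in>I. (f(a:=True)) i} = Suc (card {i\<in>A. f i})" for f
    proof -
      have "{i\<in>I. (f(a:=True)) i} = insert a {i\<in>A. f i}" using I by auto
      then show ?thesis using I by simp
    qed
    define h where "h = (\<lambda>f. if \<forall>j\<in>insert a J. f j then g (card {i\<in>I. f i}) else 0)"
    have "(\<lambda>f. h (f(a:=True))) = (\<lambda>f. if \<forall>j\<in>J. f j then g (Suc (card {i\<in>A. f i})) else 0)"
      using insert.hyps(2) unfolding h_def card_upd by (metis fun_upd_other insert_iff fun_upd_same)
    moreover have "(\<lambda>f. h (f(a:=False))) = (\<lambda>_. 0)"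
      by (simp add: h_def)
    ultimately have "measure_pmf.expectation (Pi_pmf I False (\<lambda>_. bernoulli_pmf p)) h
      = p * measure_pmf.expectation (Pi_pmf A False (\<lambda>_. bernoulli_pmf p))
           (\<lambda>f. if \<forall>j\<in>J. f j then g (Suc (card {i\<in>A. f i})) else 0)"
      using I assms(3,4) by (simp add: expectation_Pi_pmf_insert_bernoulli)
    also have "\<dots> = p ^ card (insert a J)
        * measure_pmf.expectation (binomial_pmf (card I - card (insert a J)) p) (\<lambda>m. g (m + card (insert a J)))"
      using insert.IH[OF I(3,4), of "\<lambda>m. g (Suc m)"] insert.hyps card_A by simp
    finally show ?case unfolding h_def .
  qed
qed

lemma sum_binomial_shift:
  fixes f :: "nat \<Rightarrow> real"
  assumes "a \<le> n" "0 \<le> p" "p \<le> 1"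
  shows "(\<Sum>m=a..n. real ((n-a) choose (m-a)) * p^(m-a) * (1-p)^(n-m) * f m)
    = measure_pmf.expectation (binomial_pmf (n-a) p) (\<lambda>m. f (m + a))"
proof -
  let ?F = "\<lambda>m. real ((n-a) choose (m-a)) * p^(m-a) * (1-p)^(n-m) * f m"
  have "sum ?F {a..n} = sum ?F {0+a..(n-a)+a}"
    using assms by simp
  also have "\<dots> = (\<Sum>m=0..n-a. ?F (m + a))"
    by (rule sum.shift_bounds_cl_nat_ivl)
  also have "\<dots> = measure_pmf.expectation (binomial_pmf (n-a) p) (\<lambda>m. f (m + a))"
    using assms by (simp add: expectation_binomial_pmf' atLeast0AtMost add.commute)
  finally show ?thesis .
qed

lemma sum_sum_diagonal_split:
  fixes w :: "'a \<Rightarrow> real"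
  assumes "finite I"
  shows "(\<Sum>i\<in>I. \<Sum>l\<in>I. w i * w l * (if i = l then a else b))
    = a * (\<Sum>i\<in>I. (w i)^2) + b * ((\<Sum>i\<in>I. w i)^2 - (\<Sum>i\<in>I. (w i)^2))"
proof -
  have "(\<Sum>i\<in>I. \<Sum>l\<in>I. w i * w l * (if i = l then a else b))
      = (\<Sum>i\<in>I. \<Sum>l\<in>I. b * (w i * w l) + (if i = l then (a - b) * (w i)^2 else 0))"
    by (intro sum.cong refl) (auto simp: algebra_simps power2_eq_square)
  also have "\<dots> = b * (\<Sum>i\<in>I. w i)^2 + (a - b) * (\<Sum>i\<in>I. (w i)^2)"
    using assms by (simp add: sum.distrib sum_distrib_left power2_eq_square sum_product mult_ac)
  finally show ?thesis by (simp add: algebra_simps)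
qed

lemma power2_sum_lessThan:
  fixes a :: "nat \<Rightarrow> real"
  shows "(\<Sum>i<n. a i)^2 = (\<Sum>i<n. (a i)^2) + 2 * (\<Sum>i<n. \<Sum>l\<in>{i+1..<n}. a i * a l)"
proof (induction n)
  case 0
  then show ?case by simp
next
  case (Suc n)
  have "(\<Sum>i<Suc n. \<Sum>l\<in>{i+1..<Suc n}. a i * a l) = (\<Sum>i<n. (\<Sum>l\<in>{i+1..<n}. a i * a l) + a i * a n)"
    by (auto intro!: sum.cong)
  then show ?case
    using Suc.IH by (simp add: power2_sum sum.distrib sum_distrib_left algebra_simps)
qed

definition spatial_estimate :: "(nat \<Rightarrow> real) \<Rightarrow> ('a \<Rightarrow> real) \<Rightarrow> 'a set \<Rightarrow> ('a \<Rightarrow> bool) \<Rightarrow> real" where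
  "spatial_estimate g w I f = g (card {i\<in>I. f i}) * (\<Sum>i\<in>I. if f i then w i else 0)"

lemma spatial_estimate_eq_sum:
  "spatial_estimate g w I f = (\<Sum>i\<in>I. w i * (if f i then g (card {i\<in>I. f i}) else 0))"
  by (auto simp: spatial_estimate_def sum_distrib_left intro!: sum.cong)

lemma expectation_spatial_estimate:
  fixes w :: "'a \<Rightarrow> real"
  assumes "finite I" "0 \<le> p" "p \<le> 1"
  shows "measure_pmf.expectation (Pi_pmf I False (\<lambda>_. bernoulli_pmf p)) (spatial_estimate g w I)
    = p * measure_pmf.expectation (binomial_pmf (card I - 1) p) (\<lambda>m. g (m + 1)) * (\<Sum>i\<in>I. w i)"
proof -
  have "measure_pmf.expectation (Pi_pmf I False (\<lambda>_. bernoulli_pmf p))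
      (\<lambda>f. if f i then g (card {i\<in>I. f i}) else 0)
    = p * measure_pmf.expectation (binomial_pmf (card I - 1) p) (\<lambda>m. g (m + 1))" if "i \<in> I" for i
    using expectation_Pi_pmf_bernoulli_all_true[of I "{i}" p g] that assms by simp
  then show ?thesis
    using assms
    by (simp add: spatial_estimate_eq_sum[abs_def] finite_set_Pi_pmf_bernoulli integrable_measure_pmf_finite
          sum_distrib_left sum_distrib_right mult_ac cong: sum.cong)
qed

lemma expectation_spatial_estimate_squared:
  fixes w :: "'a \<Rightarrow> real"
  assumes "finite I" "0 \<le> p" "p \<le> 1"
  shows "measure_pmf.expectation (Pi_pmf I False (\<lambda>_. bernoulli_pmf p)) (\<lambda>f. (spatial_estimate g w I f)^2)
    = p * measure_pmf.expectation (binomial_pmf (card I - 1) p) (\<lambda>m. (g (m + 1))^2) * (\<Sum>i\<in>I. (w i)^2)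
      + p^2 * measure_pmf.expectation (binomial_pmf (card I - 2) p) (\<lambda>m. (g (m + 2))^2)
        * ((\<Sum>i\<in>I. w i)^2 - (\<Sum>i\<in>I. (w i)^2))"
proof -
  let ?P = "Pi_pmf I False (\<lambda>_. bernoulli_pmf p)"
  let ?both = "\<lambda>i l f. if \<forall>j\<in>{i,l}. f j then (g (card {i\<in>I. f i}))^2 else 0"
  have "(\<lambda>f. (spatial_estimate g w I f)^2) = (\<lambda>f. \<Sum>i\<in>I. \<Sum>l\<in>I. w i * w l * ?both i l f)"
    by (auto simp: spatial_estimate_eq_sum power2_eq_square sum_product intro!: sum.cong)
  moreover have "measure_pmf.expectation ?P (?both i l)
      = (if i = l then p * measure_pmf.expectation (binomial_pmf (card I - 1) p) (\<lambda>m. (g (m + 1))^2)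
         else p^2 * measure_pmf.expectation (binomial_pmf (card I - 2) p) (\<lambda>m. (g (m + 2))^2))"
    if "i \<in> I" "l \<in> I" for i l
    using that assms by (subst expectation_Pi_pmf_bernoulli_all_true) (auto simp: card_insert_if numeral_2_eq_2)
  ultimately show ?thesis
    using assms
    by (simp add: finite_set_Pi_pmf_bernoulli integrable_measure_pmf_finite sum_sum_diagonal_split
          cong: sum.cong)
qed

lemma expectation_spatial_estimate_deviation:
  fixes w :: "'a \<Rightarrow> real"
  assumes "finite I" "0 \<le> p" "p \<le> 1"
    and "p * measure_pmf.expectation (binomial_pmf (card I - 1) p) (\<lambda>m. g (m + 1)) * (\<Sum>i\<in>I. w i) = c"
  shows "measure_pmf.expectation (Pi_pmf I False (\<lambda>_. bernoulli_pmf p)) (\<lambda>f. (spatial_estimate g w I f - c)^2)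
    = p * measure_pmf.expectation (binomial_pmf (card I - 1) p) (\<lambda>m. (g (m + 1))^2) * (\<Sum>i\<in>I. (w i)^2)
      + p^2 * measure_pmf.expectation (binomial_pmf (card I - 2) p) (\<lambda>m. (g (m + 2))^2)
        * ((\<Sum>i\<in>I. w i)^2 - (\<Sum>i\<in>I. (w i)^2))
      - c^2"
  using measure_pmf.variance_eq[of "Pi_pmf I False (\<lambda>_. bernoulli_pmf p)" "spatial_estimate g w I"]
    expectation_spatial_estimate[OF assms(1-3)] expectation_spatial_estimate_squared[OF assms(1-3)] assms
  by (simp add: finite_set_Pi_pmf_bernoulli integrable_measure_pmf_finite)

lemma eq_bernoulli_pmfI:
  assumes "pmf q True = p"
  shows "q = bernoulli_pmf p"
proof (rule pmf_eqI)
  have "0 \<le> p" "p \<le> 1" using assms pmf_le_1[of q True] pmf_nonneg[of q True] by auto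
  then show "pmf q b = pmf (bernoulli_pmf p) b" for b
    by (cases b) (simp_all add: pmf_False_conv_True[of q] assms)
qed

lemma finite_ksubsets: "finite (ksubsets d k)"
  unfolding ksubsets_def by (rule finite_subset[of _ "Pow {..<d}"]) auto

lemma ksubsets_nonempty: "k \<le> d \<Longrightarrow> ksubsets d k \<noteq> {}"
  unfolding ksubsets_def by (auto intro!: exI[of _ "{..<k}"])

lemma card_ksubsets: "card (ksubsets d k) = d choose k"
  unfolding ksubsets_def using n_subsets[of "{..<d}" k] by simp

lemma card_ksubsets_containing:
  assumes "j < d" "1 \<le> k"
  shows "card {A \<in> ksubsets d k. j \<in> A} = (d - 1) choose (k - 1)"
proof -
  let ?B = "{B. B \<subseteq> {..<d} - {j} \<and> card B = k - 1}"
  have "{A \<in> ksubsets d k. j \<in> A} = insert j ` ?B"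
  proof (intro equalityI subsetI)
    fix A assume "A \<in> {A \<in> ksubsets d k. j \<in> A}"
    then have "A = insert j (A - {j})" "A - {j} \<in> ?B"
      using finite_subset[of A "{..<d}"] by (auto simp: ksubsets_def)
    then show "A \<in> insert j ` ?B" by blast
  next
    fix A assume "A \<in> insert j ` ?B"
    then obtain B where B: "A = insert j B" "B \<subseteq> {..<d} - {j}" "card B = k - 1" by auto
    then have "finite B" "j \<notin> B" using finite_subset[of B "{..<d}"] by auto
    then show "A \<in> {A \<in> ksubsets d k. j \<in> A}"
      using assms B by (auto simp: ksubsets_def)
  qed
  moreover have "inj_on (insert j) ?B"
    by (auto intro!: inj_onI)
  ultimately have "card {A \<in> ksubsets d k. j \<in> A} = card ({..<d} - {j}) choose (k - 1)"
    by (simp add: card_image n_subsets)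
  then show ?thesis using assms by simp
qed

lemma membership_pmf_of_ksubsets:
  assumes "1 \<le> k" "k \<le> d" "j < d"
  shows "map_pmf (\<lambda>A. j \<in> A) (pmf_of_set (ksubsets d k)) = bernoulli_pmf (real k / real d)"
proof (rule eq_bernoulli_pmfI)
  have "pmf (map_pmf (\<lambda>A. j \<in> A) (pmf_of_set (ksubsets d k))) True
      = real (card {A \<in> ksubsets d k. j \<in> A}) / real (card (ksubsets d k))"
    using assms finite_ksubsets ksubsets_nonempty
    by (simp add: pmf_map vimage_def measure_pmf_of_set Int_def conj_commute)
  also have "\<dots> = real ((d - 1) choose (k - 1)) / real (d choose k)"
    using assms by (simp add: card_ksubsets_containing card_ksubsets)
  also have "\<dots> = real k / real d"
    using times_binomial_minus1_eq[of k d] assms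
    by (simp add: field_simps flip: of_nat_mult)
  finally show "pmf (map_pmf (\<lambda>A. j \<in> A) (pmf_of_set (ksubsets d k))) True = real k / real d" .
qed

lemma finite_set_subsets_pmf: "k \<le> d \<Longrightarrow> finite (set_pmf (subsets_pmf n d k))"
  unfolding subsets_pmf_def by (subst set_Pi_pmf) (auto simp: finite_ksubsets ksubsets_nonempty)

lemma membership_subsets_pmf:
  assumes "1 \<le> k" "k \<le> d" "j < d"
  shows "map_pmf (\<lambda>S i. j \<in> S i) (subsets_pmf n d k)
    = Pi_pmf {..<n} False (\<lambda>_. bernoulli_pmf (real k / real d))"
  using Pi_pmf_map[of "{..<n}" "\<lambda>A. j \<in> A" "{}" False "\<lambda>_. pmf_of_set (ksubsets d k)"]
  by (simp add: subsets_pmf_def membership_pmf_of_ksubsets[OF assms] comp_def)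

lemma inverse_beta_bar_eq_expectation:
  assumes "1 \<le> n" "k \<le> d"
  defines "p \<equiv> real k / real d"
  shows "inverse (beta_bar n d k T) = p * measure_pmf.expectation (binomial_pmf (n-1) p) (\<lambda>m. 1 / T (m + 1))"
proof -
  have p: "0 \<le> p" "p \<le> 1" using assms by (auto simp: p_def divide_le_eq_1)
  have "(\<Sum>m=1..n. real k / (real d * T m) * real ((n-1) choose (m-1)) * p^(m-1) * (1-p)^(n-m))
      = p * (\<Sum>m=1..n. real ((n-1) choose (m-1)) * p^(m-1) * (1-p)^(n-m) * (1 / T m))"
    unfolding sum_distrib_left by (intro sum.cong refl) (simp add: p_def)
  also have "\<dots> = p * measure_pmf.expectation (binomial_pmf (n-1) p) (\<lambda>m. 1 / T (m + 1))"
    by (subst sum_binomial_shift) (use assms(1) p in simp_all)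
  finally show ?thesis
    unfolding beta_bar_def p_def[symmetric] by simp
qed

lemma c1_eq_expectation:
  assumes "1 \<le> n" "k \<le> d"
  defines "p \<equiv> real k / real d"
  shows "c1 n d k T = (beta_bar n d k T)^2 * (p * measure_pmf.expectation (binomial_pmf (n-1) p) (\<lambda>m. (1 / T (m + 1))^2))
    - real d / real k"
proof -
  have p: "0 \<le> p" "p \<le> 1" using assms by (auto simp: p_def divide_le_eq_1)
  have "(\<Sum>m=1..n. real k / (real d * (T m)^2) * real ((n-1) choose (m-1)) * p^(m-1) * (1-p)^(n-m))
      = p * (\<Sum>m=1..n. real ((n-1) choose (m-1)) * p^(m-1) * (1-p)^(n-m) * (1 / T m)^2)"
    unfolding sum_distrib_left by (intro sum.cong refl) (simp add: p_def power_one_over)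
  also have "\<dots> = p * measure_pmf.expectation (binomial_pmf (n-1) p) (\<lambda>m. (1 / T (m + 1))^2)"
    by (subst sum_binomial_shift) (use assms(1) p in simp_all)
  finally show ?thesis
    unfolding c1_def p_def[symmetric] by simp
qed

lemma c2_eq_expectation:
  assumes "2 \<le> n" "k \<le> d"
  defines "p \<equiv> real k / real d"
  shows "c2 n d k T = 1 - (beta_bar n d k T)^2 * (p^2 * measure_pmf.expectation (binomial_pmf (n-2) p) (\<lambda>m. (1 / T (m + 2))^2))"
proof -
  have p: "0 \<le> p" "p \<le> 1" using assms by (auto simp: p_def divide_le_eq_1)
  have "(\<Sum>m=2..n. (real k)^2 / ((real d)^2 * (T m)^2) * real ((n-2) choose (m-2)) * p^(m-2) * (1-p)^(n-m))
      = p^2 * (\<Sum>m=2..n. real ((n-2) choose (m-2)) * p^(m-2) * (1-p)^(n-m) * (1 / T m)^2)"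
    unfolding sum_distrib_left by (intro sum.cong refl) (simp add: p_def power_one_over power_divide mult_ac)
  also have "\<dots> = p^2 * measure_pmf.expectation (binomial_pmf (n-2) p) (\<lambda>m. (1 / T (m + 2))^2)"
    by (subst sum_binomial_shift) (use assms(1) p in simp_all)
  finally show ?thesis
    unfolding c2_def p_def[symmetric] by simp
qed

lemma xhat_eq_spatial_estimate:
  "xhat n d k T x S j
    = spatial_estimate (\<lambda>m. beta_bar n d k T / real n * (1 / T m)) (\<lambda>i. x i j) {..<n} (\<lambda>i. j \<in> S i)"
proof (cases "Mcount n S j = 0")
  case True
  then have "\<forall>i<n. j \<notin> S i" by (auto simp: Mcount_def)
  then show ?thesis using True by (simp add: xhat_def spatial_estimate_def)
next
  case False
  then show ?thesis
    by (simp add: xhat_def spatial_estimate_def Mcount_def hval_def Suc_le_eq)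
qed

lemma sum_sum_power2_eq_R1: "(\<Sum>j<d. \<Sum>i<n. (x i j)^2) = R1 n d x"
  unfolding R1_def by (rule sum.swap)

lemma sum_power2_sum_eq_R1_R2: "(\<Sum>j<d. (\<Sum>i<n. x i j)^2) = R1 n d x + R2 n d x"
proof -
  have "(\<Sum>j<d. \<Sum>i<n. \<Sum>l\<in>{i+1..<n}. x i j * x l j) = (\<Sum>i<n. \<Sum>l\<in>{i+1..<n}. \<Sum>j<d. x i j * x l j)"
    by (subst sum.swap) (simp add: sum.swap[of _ "{..<d}"])
  then show ?thesis
    by (simp add: power2_sum_lessThan sum.distrib sum_sum_power2_eq_R1 R2_def flip: sum_distrib_left)
qed

lemma expectation_xhat_coordinate_error:
  fixes n d k j :: nat and T :: "nat \<Rightarrow> real" and x :: "nat \<Rightarrow> nat \<Rightarrow> real"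
  assumes "1 \<le> k" "k \<le> d" "j < d"
  defines "p \<equiv> real k / real d" and "\<beta> \<equiv> beta_bar n d k T"
  defines "A \<equiv> p * measure_pmf.expectation (binomial_pmf (n-1) p) (\<lambda>m. (1 / T (m + 1))^2)"
    and "B \<equiv> p^2 * measure_pmf.expectation (binomial_pmf (n-2) p) (\<lambda>m. (1 / T (m + 2))^2)"
  assumes unbiased: "\<beta> * (p * measure_pmf.expectation (binomial_pmf (n-1) p) (\<lambda>m. 1 / T (m + 1))) = 1"
  shows "measure_pmf.expectation (subsets_pmf n d k) (\<lambda>S. (xhat n d k T x S j - xbar n x j)^2)
    = (\<beta> / real n)^2 * (A * (\<Sum>i<n. (x i j)^2) + B * ((\<Sum>i<n. x i j)^2 - (\<Sum>i<n. (x i j)^2)))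
      - ((\<Sum>i<n. x i j) / real n)^2"
proof -
  let ?g = "\<lambda>m. \<beta> / real n * (1 / T m)"
  have p: "0 \<le> p" "p \<le> 1" using assms(2) by (auto simp: p_def divide_le_eq_1)
  have scale: "measure_pmf.expectation M (\<lambda>m. (?g (m + a))^e)
      = (\<beta> / real n)^e * measure_pmf.expectation M (\<lambda>m. (1 / T (m + a))^e)" for M a e
    unfolding power_mult_distrib by (rule integral_mult_right_zero)
  have "p * measure_pmf.expectation (binomial_pmf (n-1) p) (\<lambda>m. ?g (m + 1)) * (\<Sum>i<n. x i j)
      = (\<Sum>i<n. x i j) / real n"
  proof -
    have "p * measure_pmf.expectation (binomial_pmf (n-1) p) (\<lambda>m. ?g (m + 1))
        = \<beta> * (p * measure_pmf.expectation (binomial_pmf (n-1) p) (\<lambda>m. 1 / T (m + 1))) / real n"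
      using scale[of _ 1 1] by simp
    then show ?thesis using unbiased by simp
  qed
  then have "measure_pmf.expectation (Pi_pmf {..<n} False (\<lambda>_. bernoulli_pmf p))
      (\<lambda>f. (spatial_estimate ?g (\<lambda>i. x i j) {..<n} f - (\<Sum>i<n. x i j) / real n)^2)
    = (\<beta> / real n)^2 * (A * (\<Sum>i<n. (x i j)^2) + B * ((\<Sum>i<n. x i j)^2 - (\<Sum>i<n. (x i j)^2)))
      - ((\<Sum>i<n. x i j) / real n)^2"
    using expectation_spatial_estimate_deviation[of "{..<n}" p ?g "\<lambda>i. x i j"] p
    by (simp only: scale card_lessThan finite_lessThan) (simp add: A_def B_def algebra_simps)
  moreover have "measure_pmf.expectation (subsets_pmf n d k) (\<lambda>S. (xhat n d k T x S j - xbar n x j)^2)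
    = measure_pmf.expectation (map_pmf (\<lambda>S i. j \<in> S i) (subsets_pmf n d k))
        (\<lambda>f. (spatial_estimate ?g (\<lambda>i. x i j) {..<n} f - (\<Sum>i<n. x i j) / real n)^2)"
    by (simp add: xhat_eq_spatial_estimate xbar_def \<beta>_def)
  ultimately show ?thesis
    using membership_subsets_pmf[OF assms(1-3)] by (simp add: p_def)
qed

lemma expectation_xhat_error:
  fixes n d k :: nat and T :: "nat \<Rightarrow> real" and x :: "nat \<Rightarrow> nat \<Rightarrow> real"
  assumes "1 \<le> k" "k \<le> d"
  defines "p \<equiv> real k / real d" and "\<beta> \<equiv> beta_bar n d k T"
  defines "A \<equiv> p * measure_pmf.expectation (binomial_pmf (n-1) p) (\<lambda>m. (1 / T (m + 1))^2)"
    and "B \<equiv> p^2 * measure_pmf.expectation (binomial_pmf (n-2) p) (\<lambda>m. (1 / T (m + 2))^2)"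
  assumes unbiased: "\<beta> * (p * measure_pmf.expectation (binomial_pmf (n-1) p) (\<lambda>m. 1 / T (m + 1))) = 1"
  shows "measure_pmf.expectation (subsets_pmf n d k) (\<lambda>S. \<Sum>j<d. (xhat n d k T x S j - xbar n x j)^2)
    = (\<beta> / real n)^2 * (A * R1 n d x + B * R2 n d x) - (R1 n d x + R2 n d x) / (real n)^2"
proof -
  define W where "W j = (\<Sum>i<n. x i j)" for j
  define Q where "Q j = (\<Sum>i<n. (x i j)^2)" for j
  have "measure_pmf.expectation (subsets_pmf n d k) (\<lambda>S. \<Sum>j<d. (xhat n d k T x S j - xbar n x j)^2)
      = (\<Sum>j<d. measure_pmf.expectation (subsets_pmf n d k) (\<lambda>S. (xhat n d k T x S j - xbar n x j)^2))"
    using finite_set_subsets_pmf[OF assms(2)] by (simp add: integrable_measure_pmf_finite)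
  also have "\<dots> = (\<Sum>j<d. (\<beta> / real n)^2 * (A * Q j + B * ((W j)^2 - Q j)) - (W j / real n)^2)"
    using expectation_xhat_coordinate_error[OF assms(1,2)] unbiased
    by (simp add: A_def B_def W_def Q_def p_def \<beta>_def)
  also have "\<dots> = (\<beta> / real n)^2 * (A * (\<Sum>j<d. Q j) + B * ((\<Sum>j<d. (W j)^2) - (\<Sum>j<d. Q j)))
      - (\<Sum>j<d. (W j)^2) / (real n)^2"
    by (simp add: sum_subtractf sum.distrib sum_distrib_left algebra_simps power_divide flip: sum_divide_distrib)
  also have "\<dots> = (\<beta> / real n)^2 * (A * R1 n d x + B * R2 n d x) - (R1 n d x + R2 n d x) / (real n)^2"
    by (simp add: W_def Q_def sum_sum_power2_eq_R1 sum_power2_sum_eq_R1_R2)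
  finally show ?thesis .
qed

theorem theorem1:
  fixes n d k :: nat and T :: "nat \<Rightarrow> real" and x :: "nat \<Rightarrow> nat \<Rightarrow> real"
  assumes "n \<ge> 1" and "1 \<le> k" and "k \<le> d"
    and "\<And>m. m \<in> {1..n} \<Longrightarrow> T m \<noteq> 0"
    and "(\<Sum>m=1..n. real k / (real d * T m) * real ((n-1) choose (m-1))
       * (real k / real d) ^ (m-1) * (1 - real k / real d) ^ (n-m)) \<noteq> 0"
  shows "measure_pmf.expectation (subsets_pmf n d k)
           (\<lambda>S. \<Sum>j<d. (xhat n d k T x S j - xbar n x j)^2)
         = 1 / (real n)^2 * (real d / real k - 1) * R1 n d x
           + 1 / (real n)^2 * (c1 n d k T * R1 n d x - c2 n d k T * R2 n d x)"
proof -
  define p where "p = real k / real d"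
  define \<beta> where "\<beta> = beta_bar n d k T"
  have "\<beta> \<noteq> 0"
    using assms(5) by (simp add: \<beta>_def beta_bar_def)
  then have unbiased: "\<beta> * (p * measure_pmf.expectation (binomial_pmf (n-1) p) (\<lambda>m. 1 / T (m + 1))) = 1"
    using inverse_beta_bar_eq_expectation[OF assms(1,3), of T, folded p_def \<beta>_def] by (metis right_inverse)
  note error = expectation_xhat_error[OF assms(2,3) unbiased[unfolded p_def \<beta>_def], of x]
  show ?thesis
  proof (cases "n \<ge> 2")
    case True
    with error assms(1,3) show ?thesis
      by (simp add: c1_eq_expectation c2_eq_expectation field_simps)
  next
    case False
    then have "n = 1" "R2 n d x = 0" using assms(1) by (simp_all add: R2_def)
    with error assms(3) show ?thesis
      by (simp add: c1_eq_expectation field_simps)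
  qed
qed

end
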